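(* Let $\Omega\subset\mathbb{R}^2$ be a compact domain with Lipschitz boundary containing a neighborhood of the origin, and let $D$ be a measurable subset of the boundary of the slit domain. Given $\epsilon>0$ and $E_0>0$, there exists $r^*>0$ such that if $u$ is an eigenfunction of $q$ on $H^1_D(\Omega_{\Sigma_t})$ with eigenvalue $E\le E_0$, then for all $t<r^*$, \[\int_{U_{t,r^*}}|u|^2\,dm\le\epsilon\int_{\Omega}|u|^2\,dm,\] where $U_{t,r^*}$ is the elliptical neighborhood of the slit $\Sigma_t$ of radius $r^*$.
   Context: $\Sigma_t=[-t,t]\times\{0\}$; $\Omega_{\Sigma_t}$ is the metric completion of $\Omega\setminus\Sigma_t$ for the intrinsic length metric. $H^1_D$ is the completion of smooth functions on $\Omega_{\Sigma_t}$ vanishing on $D$ for the norm $q(u)^{1/2}+N(u)^{1/2}$, $q(u)=\int|\nabla u|^2dm$, $N(u)=\int|u|^2dm$; $u$ is an eigenfunction with eigenvalue $E$ if $\mathfrak q(u,v)=E\,\mathfrak n(u,v)$ for all $v\in H^1_D$ (polarizations). Elliptical coordinates: $\phi_t(r,\theta)=(\sqrt{r^2+t^2}\cos\theta,\ r\sin\theta)$ for $r\ge 0$, $\theta\in\mathbb{R}/2\pi\mathbb{Z}$; the elliptical neighborhood of radius $\rho$ is $U_{t,\rho}=\phi_t([0,\rho]\times S^1)$, the closed region bounded by the ellipse $\phi_t(\{\rho\}\times S^1)$. *)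

theory Defs
  imports "HOL-Analysis.Analysis"
begin

type_synonym pt = "real \<times> real"

definition compact_domain :: "pt set \<Rightarrow> bool" where
  "compact_domain \<Omega> \<longleftrightarrow> compact \<Omega> \<and> interior \<Omega> \<noteq> {} \<and> connected (interior \<Omega>)
     \<and> closure (interior \<Omega>) = \<Omega>"

definition lipschitz_boundary :: "pt set \<Rightarrow> bool" where
  "lipschitz_boundary \<Omega> \<longleftrightarrow>
     (\<forall>p\<in>frontier \<Omega>. \<exists>R a b L g. orthogonal_transformation R \<and> a > 0 \<and> b > 0 \<and>
        L-lipschitz_on UNIV (g :: real \<Rightarrow> real) \<and>
        (\<forall>s. \<bar>s\<bar> < a \<longrightarrow> \<bar>g s\<bar> < b / 2) \<and>
        (\<forall>y1 y2. \<bar>y1\<bar> < a \<and> \<bar>y2\<bar> < b \<longrightarrow> (p + R (y1, y2) \<in> \<Omega> \<longleftrightarrow> y2 \<le> g y1)))"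

definition slit :: "real \<Rightarrow> pt set" where
  "slit t = {-t..t} \<times> {0}"

definition ell_coord :: "real \<Rightarrow> real \<Rightarrow> real \<Rightarrow> pt" where
  "ell_coord t r \<theta> = (sqrt (r\<^sup>2 + t\<^sup>2) * cos \<theta>, r * sin \<theta>)"

definition ell_nbhd :: "real \<Rightarrow> real \<Rightarrow> pt set" where
  "ell_nbhd t \<rho> = (\<lambda>(r, \<theta>). ell_coord t r \<theta>) ` ({0..\<rho>} \<times> UNIV)"

definition curve_length :: "(real \<Rightarrow> pt) \<Rightarrow> ennreal" where
  "curve_length g = (SUP (n, s) \<in> {(n, s :: nat \<Rightarrow> real). mono s \<and> s 0 = 0 \<and> s n = 1}.
      ennreal (\<Sum>i<n. dist (g (s i)) (g (s (Suc i)))))"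

definition idist :: "pt set \<Rightarrow> real \<Rightarrow> pt \<Rightarrow> pt \<Rightarrow> ennreal" where
  "idist \<Omega> t x y = (INF g \<in> {g. path g \<and> path_image g \<subseteq> \<Omega> - slit t \<and>
        pathstart g = x \<and> pathfinish g = y}. curve_length g)"

definition icauchy :: "pt set \<Rightarrow> real \<Rightarrow> (nat \<Rightarrow> pt) \<Rightarrow> bool" where
  "icauchy \<Omega> t x \<longleftrightarrow> range x \<subseteq> \<Omega> - slit t \<and>
     (\<forall>e>0. \<exists>N. \<forall>m\<ge>N. \<forall>n\<ge>N. idist \<Omega> t (x m) (x n) < ennreal e)"

definition iequiv :: "pt set \<Rightarrow> real \<Rightarrow> (nat \<Rightarrow> pt) \<Rightarrow> (nat \<Rightarrow> pt) \<Rightarrow> bool" where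
  "iequiv \<Omega> t x y \<longleftrightarrow> (\<forall>e>0. \<exists>N. \<forall>n\<ge>N. idist \<Omega> t (x n) (y n) < ennreal e)"

text \<open>Points of the metric completion \<Omega>_\<Sigma>_t: equivalence classes of Cauchy sequences.\<close>
definition slit_completion :: "pt set \<Rightarrow> real \<Rightarrow> (nat \<Rightarrow> pt) set set" where
  "slit_completion \<Omega> t = {{y. icauchy \<Omega> t y \<and> iequiv \<Omega> t x y} | x. icauchy \<Omega> t x}"

definition slit_boundary :: "pt set \<Rightarrow> real \<Rightarrow> (nat \<Rightarrow> pt) set set" where
  "slit_boundary \<Omega> t = {c \<in> slit_completion \<Omega> t.
      \<not> (\<exists>p \<in> interior \<Omega> - slit t. (\<lambda>n. p) \<in> c)}"

definition cdist :: "pt set \<Rightarrow> real \<Rightarrow> (nat \<Rightarrow> pt) set \<Rightarrow> (nat \<Rightarrow> pt) set \<Rightarrow> ennreal" where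
  "cdist \<Omega> t c c' = (INF x\<in>c. INF y\<in>c'. limsup (\<lambda>n. idist \<Omega> t (x n) (y n)))"

definition cdiam :: "pt set \<Rightarrow> real \<Rightarrow> (nat \<Rightarrow> pt) set set \<Rightarrow> ennreal" where
  "cdiam \<Omega> t A = (SUP c\<in>A. SUP c'\<in>A. cdist \<Omega> t c c')"

definition hausdorff1 :: "pt set \<Rightarrow> real \<Rightarrow> (nat \<Rightarrow> pt) set set \<Rightarrow> ennreal" where
  "hausdorff1 \<Omega> t A = (SUP \<delta>\<in>{0<..}. INF C \<in> {C :: nat \<Rightarrow> (nat \<Rightarrow> pt) set set.
      A \<subseteq> \<Union>(range C) \<and> (\<forall>i. C i \<subseteq> slit_boundary \<Omega> t \<and> cdiam \<Omega> t (C i) \<le> ennreal \<delta>)}.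
      (\<Sum>i. cdiam \<Omega> t (C i)))"

definition boundary_measurable :: "pt set \<Rightarrow> real \<Rightarrow> (nat \<Rightarrow> pt) set set \<Rightarrow> bool" where
  "boundary_measurable \<Omega> t D \<longleftrightarrow> (\<forall>T \<subseteq> slit_boundary \<Omega> t.
      hausdorff1 \<Omega> t T = hausdorff1 \<Omega> t (T \<inter> D) + hausdorff1 \<Omega> t (T - D))"

definition dirv :: "bool \<Rightarrow> pt" where
  "dirv b = (if b then (1, 0) else (0, 1))"

fun iterpd :: "bool list \<Rightarrow> (pt \<Rightarrow> real) \<Rightarrow> pt \<Rightarrow> real" where
  "iterpd [] f = f"
| "iterpd (d # ds) f = (\<lambda>x. deriv (\<lambda>s. iterpd ds f (x + s *\<^sub>R dirv d)) 0)"

definition grad :: "(pt \<Rightarrow> real) \<Rightarrow> pt \<Rightarrow> pt" where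
  "grad f x = (iterpd [True] f x, iterpd [False] f x)"

definition idist_ucont :: "pt set \<Rightarrow> real \<Rightarrow> pt set \<Rightarrow> (pt \<Rightarrow> real) \<Rightarrow> bool" where
  "idist_ucont \<Omega> t S f \<longleftrightarrow> (\<forall>e>0. \<exists>\<delta>>0. \<forall>x\<in>S. \<forall>y\<in>S.
      idist \<Omega> t x y < ennreal \<delta> \<longrightarrow> \<bar>f x - f y\<bar> < e)"

text \<open>Smooth functions on \<Omega>_\<Sigma>_t (all derivatives extend continuously to the metric
  completion) vanishing on D.\<close>
definition slit_test :: "pt set \<Rightarrow> real \<Rightarrow> (nat \<Rightarrow> pt) set set \<Rightarrow> (pt \<Rightarrow> real) \<Rightarrow> bool" where
  "slit_test \<Omega> t D \<phi> \<longleftrightarrow>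
     (\<forall>ds. iterpd ds \<phi> differentiable_on (interior \<Omega> - slit t)) \<and>
     idist_ucont \<Omega> t (\<Omega> - slit t) \<phi> \<and>
     (\<forall>ds. idist_ucont \<Omega> t (interior \<Omega> - slit t) (iterpd ds \<phi>)) \<and>
     (\<forall>c\<in>D. \<forall>x\<in>c. (\<lambda>n. \<phi> (x n)) \<longlonglongrightarrow> 0)"

text \<open>Elements of the completion H^1_D, represented by a function u together with
  its (L^2-limit) gradient G.\<close>
definition H1D :: "pt set \<Rightarrow> real \<Rightarrow> (nat \<Rightarrow> pt) set set \<Rightarrow> ((pt \<Rightarrow> real) \<times> (pt \<Rightarrow> pt)) set" where
  "H1D \<Omega> t D = {(u, G).
     set_borel_measurable lebesgue \<Omega> u \<and> set_borel_measurable lebesgue \<Omega> G \<and>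
     set_integrable lebesgue \<Omega> (\<lambda>x. (u x)\<^sup>2) \<and> set_integrable lebesgue \<Omega> (\<lambda>x. (norm (G x))\<^sup>2) \<and>
     (\<exists>\<phi>. (\<forall>n. slit_test \<Omega> t D (\<phi> n)) \<and>
        (\<forall>n. set_integrable lebesgue \<Omega> (\<lambda>x. (\<phi> n x - u x)\<^sup>2) \<and>
             set_integrable lebesgue \<Omega> (\<lambda>x. (norm (grad (\<phi> n) x - G x))\<^sup>2)) \<and>
        (\<lambda>n. LINT x:\<Omega>|lebesgue. (\<phi> n x - u x)\<^sup>2) \<longlonglongrightarrow> 0 \<and>
        (\<lambda>n. LINT x:\<Omega>|lebesgue. (norm (grad (\<phi> n) x - G x))\<^sup>2) \<longlonglongrightarrow> 0)}"

definition is_eigenfunction ::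
  "pt set \<Rightarrow> real \<Rightarrow> (nat \<Rightarrow> pt) set set \<Rightarrow> (pt \<Rightarrow> real) \<Rightarrow> (pt \<Rightarrow> pt) \<Rightarrow> real \<Rightarrow> bool" where
  "is_eigenfunction \<Omega> t D u G E \<longleftrightarrow> (u, G) \<in> H1D \<Omega> t D \<and>
     (\<forall>v H. (v, H) \<in> H1D \<Omega> t D \<longrightarrow>
        (LINT x:\<Omega>|lebesgue. G x \<bullet> H x) = E * (LINT x:\<Omega>|lebesgue. u x * v x))"

end

theory Submission
  imports Defs
begin

text \<open>Since 0 < t <= r, the elliptical neighbourhood U_{t,r} lies in the box
  [-2r, 2r] x [-r, r], and since \<Omega> contains the ball B(0, 2a) with 2r <= a, every horizontal
  segment [-a, a] x {y} with 0 < |y| <= r lies in \<Omega> and misses the slit. On such a segment the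
  fundamental theorem of calculus, averaged over the segment, gives
  phi(x, y)^2 <= 3/(2a) int phi^2 + a int (d_x phi)^2 for a smooth test function phi; integrating
  over the box (minus the null axis y = 0) yields
  int_U phi^2 <= C r (int_\<Omega> phi^2 + int_\<Omega> |grad phi|^2) with C depending only on a. This
  passes to H^1_D by approximation, and for an eigenfunction int |G|^2 = E int u^2 <= E0 int u^2,
  so a small r makes the factor at most \<epsilon>.\<close>

lemma square_le_square_plus_integral:
  fixes f f' :: "real \<Rightarrow> real"
  assumes deriv: "\<And>x. x \<in> {a..b} \<Longrightarrow> (f has_real_derivative f' x) (at x)"
    and cont: "continuous_on {a..b} f'"
    and s: "s \<in> {a..b}" and x: "x \<in> {a..b}"
  shows "(f x)\<^sup>2 \<le> (f s)\<^sup>2 + integral {a..b} (\<lambda>w. \<bar>2 * f w * f' w\<bar>)"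
proof -
  have "continuous_on {a..b} f"
    using deriv by (meson DERIV_continuous continuous_at_imp_continuous_on)
  then have abs_cont: "continuous_on {a..b} (\<lambda>w. \<bar>2 * f w * f' w\<bar>)"
    by (intro continuous_intros cont)
  have change_bound: "\<bar>(f q)\<^sup>2 - (f p)\<^sup>2\<bar> \<le> integral {a..b} (\<lambda>w. \<bar>2 * f w * f' w\<bar>)"
    if pq: "p \<le> q" "p \<in> {a..b}" "q \<in> {a..b}" for p q
  proof -
    have sub: "{p..q} \<subseteq> {a..b}" using pq by auto
    have "((\<lambda>w. 2 * f w * f' w) has_integral (f q)\<^sup>2 - (f p)\<^sup>2) {p..q}"
    proof (rule fundamental_theorem_of_calculus[OF pq(1)])
      fix w assume "w \<in> {p..q}"
      then have "((\<lambda>w. (f w)\<^sup>2) has_real_derivative 2 * f w * f' w) (at w)"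
        using deriv sub by (auto intro!: derivative_eq_intros)
      then show "((\<lambda>w. (f w)\<^sup>2) has_vector_derivative 2 * f w * f' w) (at w within {p..q})"
        by (simp add: has_real_derivative_iff_has_vector_derivative has_vector_derivative_at_within)
    qed
    then have "\<bar>(f q)\<^sup>2 - (f p)\<^sup>2\<bar> \<le> integral {p..q} (\<lambda>w. \<bar>2 * f w * f' w\<bar>)"
      using integral_norm_bound_integral[of "\<lambda>w. 2 * f w * f' w" "{p..q}" "\<lambda>w. \<bar>2 * f w * f' w\<bar>"]
        integrable_continuous_interval[OF continuous_on_subset[OF abs_cont sub]]
      by (auto simp: has_integral_integrable_integral)
    also have "\<dots> \<le> integral {a..b} (\<lambda>w. \<bar>2 * f w * f' w\<bar>)"
      by (intro integral_subset_le sub integrable_continuous_interval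
          continuous_on_subset[OF abs_cont sub] abs_cont) auto
    finally show ?thesis .
  qed
  show ?thesis
    using change_bound[of s x] change_bound[of x s] s x by (cases "s \<le> x") auto
qed

lemma sobolev_1d:
  fixes f f' :: "real \<Rightarrow> real"
  assumes a: "a > 0"
    and deriv: "\<And>x. x \<in> {-a..a} \<Longrightarrow> (f has_real_derivative f' x) (at x)"
    and cont: "continuous_on {-a..a} f'"
    and x: "x \<in> {-a..a}"
  shows "(f x)\<^sup>2 \<le> 3 / (2 * a) * integral {-a..a} (\<lambda>w. (f w)\<^sup>2) + a * integral {-a..a} (\<lambda>w. (f' w)\<^sup>2)"
proof -
  define I where "I = integral {-a..a} (\<lambda>w. (f w)\<^sup>2)"
  define I' where "I' = integral {-a..a} (\<lambda>w. (f' w)\<^sup>2)"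
  define K where "K = integral {-a..a} (\<lambda>w. \<bar>2 * f w * f' w\<bar>)"
  have "continuous_on {-a..a} f"
    using deriv by (meson DERIV_continuous continuous_at_imp_continuous_on)
  then have int: "(\<lambda>w. (f w)\<^sup>2) integrable_on {-a..a}" "(\<lambda>w. (f' w)\<^sup>2) integrable_on {-a..a}"
      "(\<lambda>w. \<bar>2 * f w * f' w\<bar>) integrable_on {-a..a}"
    by (auto intro!: integrable_continuous_interval continuous_intros cont)
  have "2 * a * ((f x)\<^sup>2 - K) = integral {-a..a} (\<lambda>s. (f x)\<^sup>2 - K)"
    using a by simp
  also have "\<dots> \<le> I"
    unfolding I_def K_def
    using square_le_square_plus_integral[OF deriv cont _ x]
    by (intro integral_le int) (auto simp: algebra_simps)
  finally have average: "(f x)\<^sup>2 \<le> I / (2 * a) + K"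
    using a by (simp add: field_simps)
  have young: "\<bar>2 * f w * f' w\<bar> \<le> (f w)\<^sup>2 / a + a * (f' w)\<^sup>2" for w
  proof -
    have "0 \<le> (\<bar>f w\<bar> - a * \<bar>f' w\<bar>)\<^sup>2" by simp
    then have "a * \<bar>2 * f w * f' w\<bar> \<le> (f w)\<^sup>2 + a * (a * (f' w)\<^sup>2)"
      using a by (simp add: power2_eq_square abs_mult algebra_simps)
    then show ?thesis using a by (simp add: field_simps)
  qed
  have "K \<le> integral {-a..a} (\<lambda>w. (f w)\<^sup>2 / a + a * (f' w)\<^sup>2)"
    unfolding K_def using young int
    by (intro integral_le integrable_add integrable_on_divide integrable_on_mult_right) auto
  also have "\<dots> = I / a + a * I'"
    unfolding I_def I'_def using int
    by (simp add: integral_add integrable_on_divide integrable_on_mult_right)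
  finally show ?thesis
    using average a unfolding I_def[symmetric] I'_def[symmetric] by (simp add: field_simps)
qed

lemma nn_integral_sobolev_1d:
  fixes f f' :: "real \<Rightarrow> real"
  assumes a: "a > 0" and b: "0 \<le> b" "b \<le> a"
    and deriv: "\<And>x. x \<in> {-a..a} \<Longrightarrow> (f has_real_derivative f' x) (at x)"
    and cont: "continuous_on {-a..a} f'"
  shows "(\<integral>\<^sup>+x. ennreal (indicator {-b..b} x * (f x)\<^sup>2) \<partial>lborel)
    \<le> (\<integral>\<^sup>+x. ennreal (indicator {-a..a} x * (3 * b / a * (f x)\<^sup>2 + 2 * a * b * (f' x)\<^sup>2)) \<partial>lborel)"
proof -
  define I where "I = integral {-a..a} (\<lambda>w. (f w)\<^sup>2)"
  define I' where "I' = integral {-a..a} (\<lambda>w. (f' w)\<^sup>2)"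
  define C where "C = 3 / (2 * a) * I + a * I'"
  have bound: "(f x)\<^sup>2 \<le> C" if "x \<in> {-a..a}" for x
    unfolding C_def I_def I'_def using sobolev_1d[OF a deriv cont that] by simp
  have "0 \<le> C" using bound[of 0] a by (auto intro: order_trans[OF zero_le_power2])
  have "continuous_on {-a..a} f"
    using deriv by (meson DERIV_continuous continuous_at_imp_continuous_on)
  then have "continuous_on {-a..a} (\<lambda>x. (f x)\<^sup>2)" "continuous_on {-a..a} (\<lambda>x. (f' x)\<^sup>2)"
    using cont by (auto intro: continuous_on_power)
  then have "((\<lambda>x. 3 * b / a * (f x)\<^sup>2 + 2 * a * b * (f' x)\<^sup>2) has_integral 3 * b / a * I + 2 * a * b * I') {-a..a}"
    unfolding I_def I'_def
    by (intro has_integral_add has_integral_mult_right integrable_integral integrable_continuous_interval)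
  moreover have "3 * b / a * I + 2 * a * b * I' = 2 * b * C"
    using a by (simp add: C_def field_simps)
  ultimately have int: "((\<lambda>x. 3 * b / a * (f x)\<^sup>2 + 2 * a * b * (f' x)\<^sup>2) has_integral 2 * b * C) {-a..a}"
    by simp
  have "(\<integral>\<^sup>+x. ennreal (indicator {-b..b} x * (f x)\<^sup>2) \<partial>lborel)
      \<le> (\<integral>\<^sup>+x. ennreal (indicator {-b..b} x * C) \<partial>lborel)"
    using b bound by (intro nn_integral_mono) (auto simp: indicator_def intro!: ennreal_leI)
  also have "\<dots> = ennreal (2 * b * C)"
    using has_integral_const_real[of C "-b" b] b \<open>0 \<le> C\<close>
    by (intro nn_integral_has_integral_lebesgue) auto
  also have "\<dots> = (\<integral>\<^sup>+x. ennreal (indicator {-a..a} x * (3 * b / a * (f x)\<^sup>2 + 2 * a * b * (f' x)\<^sup>2)) \<partial>lborel)"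
    using int a b by (intro nn_integral_has_integral_lebesgue[symmetric]) auto
  finally show ?thesis .
qed

lemma norm_sq_le_twice:
  fixes x y :: "'a::real_normed_vector"
  shows "(norm x)\<^sup>2 \<le> 2 * (norm y)\<^sup>2 + 2 * (norm (x - y))\<^sup>2"
proof -
  have "norm x \<le> norm y + norm (x - y)"
    using norm_triangle_ineq[of y "x - y"] by simp
  then have "(norm x)\<^sup>2 \<le> (norm y + norm (x - y))\<^sup>2"
    by (intro power_mono) auto
  also have "\<dots> \<le> 2 * (norm y)\<^sup>2 + 2 * (norm (x - y))\<^sup>2"
    using zero_le_power2[of "norm y - norm (x - y)"] by (simp add: power2_eq_square algebra_simps)
  finally show ?thesis .
qed

lemma sets_borel_Times_interval:
  assumes "Y \<in> sets borel"
  shows "{c..d::real} \<times> Y \<in> sets (borel :: (real \<times> real) measure)"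
  using assms by (simp add: borel_prod[symmetric])

lemma borel_measurable_indicator_mult_continuous:
  fixes f :: "'a::topological_space \<Rightarrow> real"
  assumes "A \<in> sets borel" "continuous_on A f"
  shows "(\<lambda>z. indicator A z * f z) \<in> borel_measurable borel"
  using borel_measurable_continuous_on_indicator[OF assms] by simp

lemma set_integral_nonneg:
  fixes f :: "'a \<Rightarrow> real"
  assumes "\<And>x. 0 \<le> f x"
  shows "0 \<le> (LINT x:A|M. f x)"
  unfolding set_lebesgue_integral_def
  by (rule integral_nonneg_AE) (use assms in \<open>auto simp: indicator_def\<close>)

lemma nn_integral_indicator_eq_set_integral:
  fixes f :: "'a \<Rightarrow> real"
  assumes "set_integrable M A f" "\<And>x. 0 \<le> f x"
  shows "(\<integral>\<^sup>+x. ennreal (indicator A x * f x) \<partial>M) = ennreal (LINT x:A|M. f x)"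
  using nn_integral_eq_integral[of M "\<lambda>x. indicator A x * f x"] assms
  by (simp add: set_integrable_def set_lebesgue_integral_def)

lemma nn_integral_indicator_le_set_integral:
  fixes f h :: "'a \<Rightarrow> real"
  assumes "set_integrable M A h" "S \<subseteq> A" "\<And>x. 0 \<le> h x" "\<And>x. x \<in> S \<Longrightarrow> f x \<le> h x"
  shows "(\<integral>\<^sup>+x. ennreal (indicator S x * f x) \<partial>M) \<le> ennreal (LINT x:A|M. h x)"
proof -
  have "(\<integral>\<^sup>+x. ennreal (indicator S x * f x) \<partial>M) \<le> (\<integral>\<^sup>+x. ennreal (indicator A x * h x) \<partial>M)"
    using assms(2-4) by (intro nn_integral_mono ennreal_leI) (auto simp: indicator_def)
  also have "\<dots> = ennreal (LINT x:A|M. h x)"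
    using assms(1,3) by (rule nn_integral_indicator_eq_set_integral)
  finally show ?thesis .
qed

lemma nn_integral_indicator_norm_sq_le:
  fixes f g :: "'a \<Rightarrow> 'b::real_normed_vector"
  assumes "set_integrable M A (\<lambda>x. (norm (g x))\<^sup>2)" "set_integrable M A (\<lambda>x. (norm (f x - g x))\<^sup>2)"
    and "S \<subseteq> A"
  shows "(\<integral>\<^sup>+x. ennreal (indicator S x * (norm (f x))\<^sup>2) \<partial>M)
    \<le> ennreal (2 * (LINT x:A|M. (norm (g x))\<^sup>2) + 2 * (LINT x:A|M. (norm (f x - g x))\<^sup>2))"
proof -
  have "(\<integral>\<^sup>+x. ennreal (indicator S x * (norm (f x))\<^sup>2) \<partial>M)
      \<le> ennreal (LINT x:A|M. 2 * (norm (g x))\<^sup>2 + 2 * (norm (f x - g x))\<^sup>2)"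
    using assms by (intro nn_integral_indicator_le_set_integral norm_sq_le_twice set_integral_add
        set_integrable_mult_right) auto
  also have "\<dots> = ennreal (2 * (LINT x:A|M. (norm (g x))\<^sup>2) + 2 * (LINT x:A|M. (norm (f x - g x))\<^sup>2))"
    using assms by (simp add: set_integral_add set_integrable_mult_right set_integral_mult_right)
  finally show ?thesis .
qed

lemma nn_integral_indicator_sq_le_approx:
  fixes u \<phi> :: "'a \<Rightarrow> real"
  assumes "(\<lambda>z. indicator Q z * (\<phi> z)\<^sup>2) \<in> borel_measurable M"
    and "set_integrable M A (\<lambda>x. (\<phi> x - u x)\<^sup>2)" and "Q \<subseteq> A"
  shows "(\<integral>\<^sup>+z. ennreal (indicator Q z * (u z)\<^sup>2) \<partial>M)
    \<le> 2 * (\<integral>\<^sup>+z. ennreal (indicator Q z * (\<phi> z)\<^sup>2) \<partial>M) + 2 * ennreal (LINT x:A|M. (\<phi> x - u x)\<^sup>2)"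
proof -
  have "(\<integral>\<^sup>+z. ennreal (indicator Q z * (u z)\<^sup>2) \<partial>M)
      \<le> (\<integral>\<^sup>+z. 2 * ennreal (indicator Q z * (\<phi> z)\<^sup>2) + 2 * ennreal (indicator A z * (\<phi> z - u z)\<^sup>2) \<partial>M)"
  proof (intro nn_integral_mono)
    fix z
    have "(u z)\<^sup>2 \<le> 2 * (\<phi> z)\<^sup>2 + 2 * (\<phi> z - u z)\<^sup>2"
      using norm_sq_le_twice[of "u z" "\<phi> z"] by (simp add: power2_commute)
    then have "ennreal ((u z)\<^sup>2) \<le> ennreal (2 * (\<phi> z)\<^sup>2 + 2 * (\<phi> z - u z)\<^sup>2)"
      by (rule ennreal_leI)
    then show "ennreal (indicator Q z * (u z)\<^sup>2)
        \<le> 2 * ennreal (indicator Q z * (\<phi> z)\<^sup>2) + 2 * ennreal (indicator A z * (\<phi> z - u z)\<^sup>2)"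
      using assms(3) by (auto simp: indicator_def ennreal_plus ennreal_mult)
  qed
  also have "\<dots> = 2 * (\<integral>\<^sup>+z. ennreal (indicator Q z * (\<phi> z)\<^sup>2) \<partial>M)
      + 2 * ennreal (LINT x:A|M. (\<phi> x - u x)\<^sup>2)"
    using assms(1,2)
    by (simp add: nn_integral_add nn_integral_cmult nn_integral_indicator_eq_set_integral
        set_integrable_def borel_measurable_integrable)
  finally show ?thesis .
qed

text \<open>No integrability hypothesis is needed: a non-integrable set integral is 0 by convention.\<close>

lemma set_integral_le_of_nn_integral_le:
  fixes f :: "'a \<Rightarrow> real"
  assumes "(\<integral>\<^sup>+x. ennreal (indicator A x * f x) \<partial>M) \<le> ennreal c" "\<And>x. 0 \<le> f x" "0 \<le> c"
  shows "(LINT x:A|M. f x) \<le> c"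
proof (cases "set_integrable M A f")
  case True
  then show ?thesis
    using assms by (simp add: nn_integral_indicator_eq_set_integral)
next
  case False
  then show ?thesis
    using assms(3) by (simp add: set_integrable_def set_lebesgue_integral_def not_integrable_integral_eq)
qed

lemma null_sets_horizontal_axis: "UNIV \<times> {0} \<in> null_sets (lebesgue :: (real \<times> real) measure)"
proof -
  have "UNIV \<times> {0} = {z :: real \<times> real. (0, 1) \<bullet> z = 0}"
    by (auto simp: inner_prod_def)
  moreover have "negligible {z :: real \<times> real. (0, 1) \<bullet> z = 0}"
    by (rule negligible_hyperplane) (simp add: zero_prod_def)
  ultimately show ?thesis
    by (simp add: negligible_iff_null_sets)
qed

lemma nn_integral_strip_le:
  fixes \<phi> \<phi>' :: "real \<times> real \<Rightarrow> real" and a b :: real and Y :: "real set"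
  defines "S \<equiv> {-a..a} \<times> Y" and "Q \<equiv> {-b..b} \<times> Y"
  assumes a: "a > 0" and b: "0 \<le> b" "b \<le> a" and Y: "Y \<in> sets borel"
    and cont: "continuous_on S \<phi>" "continuous_on S \<phi>'"
    and deriv: "\<And>x y. (x, y) \<in> S \<Longrightarrow> ((\<lambda>s. \<phi> (s, y)) has_real_derivative \<phi>' (x, y)) (at x)"
  shows "(\<integral>\<^sup>+z. ennreal (indicator Q z * (\<phi> z)\<^sup>2) \<partial>lborel)
     \<le> ennreal (3 * b / a) * (\<integral>\<^sup>+z. ennreal (indicator S z * (\<phi> z)\<^sup>2) \<partial>lborel)
       + ennreal (2 * a * b) * (\<integral>\<^sup>+z. ennreal (indicator S z * (\<phi>' z)\<^sup>2) \<partial>lborel)"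
proof -
  define k where "k = 3 * b / a"
  define k' where "k' = 2 * a * b"
  have k: "0 \<le> k" "0 \<le> k'" using a b by (auto simp: k_def k'_def)
  have S: "S \<in> sets borel" and Q: "Q \<in> sets borel" and QS: "Q \<subseteq> S"
    using Y b unfolding S_def Q_def by (auto intro: sets_borel_Times_interval)
  have meas: "(\<lambda>z. ennreal (indicator S z * (\<phi> z)\<^sup>2)) \<in> borel_measurable borel"
      "(\<lambda>z. ennreal (indicator S z * (\<phi>' z)\<^sup>2)) \<in> borel_measurable borel"
      "(\<lambda>z. ennreal (indicator Q z * (\<phi> z)\<^sup>2)) \<in> borel_measurable borel"
    using S Q cont continuous_on_subset[OF cont(1) QS]
    by (auto intro!: borel_measurable_indicator_mult_continuous continuous_intros)
  define g where "g z = ennreal (indicator S z * (k * (\<phi> z)\<^sup>2 + k' * (\<phi>' z)\<^sup>2))" for z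
  have g_split: "g = (\<lambda>z. ennreal k * ennreal (indicator S z * (\<phi> z)\<^sup>2)
                         + ennreal k' * ennreal (indicator S z * (\<phi>' z)\<^sup>2))"
    using k by (auto simp: g_def indicator_def ennreal_plus ennreal_mult)
  have slice: "(\<integral>\<^sup>+x. ennreal (indicator Q (x, y) * (\<phi> (x, y))\<^sup>2) \<partial>lborel) \<le> (\<integral>\<^sup>+x. g (x, y) \<partial>lborel)"
    for y
  proof (cases "y \<in> Y")
    case True
    have "continuous_on {-a..a} (\<lambda>w. \<phi>' (w, y))"
      using True by (auto intro!: continuous_on_compose2[OF cont(2)] continuous_intros simp: S_def)
    then show ?thesis
      using nn_integral_sobolev_1d[OF a b, of "\<lambda>x. \<phi> (x, y)" "\<lambda>x. \<phi>' (x, y)"] deriv True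
      by (simp add: g_def S_def Q_def indicator_def k_def k'_def)
  qed (simp add: Q_def)
  have "(\<integral>\<^sup>+z. ennreal (indicator Q z * (\<phi> z)\<^sup>2) \<partial>lborel)
      = (\<integral>\<^sup>+y. (\<integral>\<^sup>+x. ennreal (indicator Q (x, y) * (\<phi> (x, y))\<^sup>2) \<partial>lborel) \<partial>lborel)"
    using lborel_pair.nn_integral_snd[of "\<lambda>z. ennreal (indicator Q z * (\<phi> z)\<^sup>2)"] meas(3)
    by (simp add: lborel_prod)
  also have "\<dots> \<le> (\<integral>\<^sup>+y. (\<integral>\<^sup>+x. g (x, y) \<partial>lborel) \<partial>lborel)"
    by (intro nn_integral_mono slice)
  also have "\<dots> = (\<integral>\<^sup>+z. g z \<partial>lborel)"
    using lborel_pair.nn_integral_snd[of g] meas(1,2)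
    by (simp add: lborel_prod g_split)
  also have "\<dots> = ennreal k * (\<integral>\<^sup>+z. ennreal (indicator S z * (\<phi> z)\<^sup>2) \<partial>lborel)
       + ennreal k' * (\<integral>\<^sup>+z. ennreal (indicator S z * (\<phi>' z)\<^sup>2) \<partial>lborel)"
    using meas(1,2) by (simp add: g_split nn_integral_add nn_integral_cmult)
  finally show ?thesis unfolding k_def k'_def .
qed

lemma has_real_derivative_first_partial:
  fixes \<phi> :: "real \<times> real \<Rightarrow> real"
  assumes "\<phi> differentiable (at (x, y))"
  shows "((\<lambda>s. \<phi> (s, y)) has_real_derivative iterpd [True] \<phi> (x, y)) (at x)"
proof -
  obtain D where D: "(\<phi> has_derivative D) (at (x, y))"
    using assms by (auto simp: differentiable_def)
  have "(\<lambda>h. D (h, 0)) = (*) (D (1, 0))"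
  proof
    fix h :: real
    have "D (h, 0) = D (h *\<^sub>R (1, 0))" by simp
    also have "\<dots> = D (1, 0) * h"
      using linear_scale[OF has_derivative_linear[OF D]] by (simp only: real_scaleR_def mult.commute)
    finally show "D (h, 0) = D (1, 0) * h" .
  qed
  moreover have "((\<lambda>s. (s, y)) has_derivative (\<lambda>h. (h, 0))) (at x)"
    by (auto intro!: derivative_eq_intros)
  then have "((\<lambda>s. \<phi> (s, y)) has_derivative (\<lambda>h. D (h, 0))) (at x)"
    using has_derivative_compose[of "\<lambda>s. (s, y)" _ x UNIV \<phi> D] D by simp
  ultimately have partial: "((\<lambda>s. \<phi> (s, y)) has_real_derivative D (1, 0)) (at x)"
    by (simp add: has_field_derivative_def)
  then have "((\<lambda>s. \<phi> ((x, y) + s *\<^sub>R dirv True)) has_real_derivative D (1, 0)) (at 0)"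
    using DERIV_shift[of "\<lambda>s. \<phi> (s, y)" "D (1, 0)" 0 x] by (simp add: dirv_def add.commute)
  then show ?thesis
    using partial by (simp add: DERIV_imp_deriv)
qed

lemma strip_estimate_smooth:
  fixes \<phi> :: "real \<times> real \<Rightarrow> real" and a b :: real and Y :: "real set"
  defines "S \<equiv> {-a..a} \<times> Y" and "Q \<equiv> {-b..b} \<times> Y"
  assumes a: "a > 0" and b: "0 \<le> b" "b \<le> a" and Y: "Y \<in> sets borel"
    and U: "open U" "S \<subseteq> U"
    and diff: "\<phi> differentiable_on U" "iterpd [True] \<phi> differentiable_on U"
  shows "(\<integral>\<^sup>+z. ennreal (indicator Q z * (\<phi> z)\<^sup>2) \<partial>lebesgue)
     \<le> ennreal (3 * b / a) * (\<integral>\<^sup>+z. ennreal (indicator S z * (\<phi> z)\<^sup>2) \<partial>lebesgue)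
       + ennreal (2 * a * b) * (\<integral>\<^sup>+z. ennreal (indicator S z * (norm (grad \<phi> z))\<^sup>2) \<partial>lebesgue)"
proof -
  have S: "S \<in> sets borel" and Q: "Q \<in> sets borel" and QS: "Q \<subseteq> S"
    using Y b unfolding S_def Q_def by (auto intro: sets_borel_Times_interval)
  have cont: "continuous_on S \<phi>" "continuous_on S (iterpd [True] \<phi>)"
    using diff U by (auto intro: continuous_on_subset differentiable_imp_continuous_on)
  have deriv: "((\<lambda>s. \<phi> (s, y)) has_real_derivative iterpd [True] \<phi> (x, y)) (at x)"
    if "(x, y) \<in> S" for x y
    using that U diff(1)
    by (intro has_real_derivative_first_partial) (auto simp: differentiable_on_eq_differentiable_at)
  have meas: "(\<lambda>z. indicator A z * (f z)\<^sup>2) \<in> borel_measurable borel"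
    if "A \<in> {S, Q}" "f \<in> {\<phi>, iterpd [True] \<phi>}" for A f
    using that S Q cont continuous_on_subset[OF cont(1) QS] continuous_on_subset[OF cont(2) QS]
    by (auto intro!: borel_measurable_indicator_mult_continuous continuous_intros)
  have "(\<integral>\<^sup>+z. ennreal (indicator Q z * (\<phi> z)\<^sup>2) \<partial>lebesgue)
      = (\<integral>\<^sup>+z. ennreal (indicator Q z * (\<phi> z)\<^sup>2) \<partial>lborel)"
    using meas by (simp add: nn_integral_completion)
  also have "\<dots> \<le> ennreal (3 * b / a) * (\<integral>\<^sup>+z. ennreal (indicator S z * (\<phi> z)\<^sup>2) \<partial>lborel)
       + ennreal (2 * a * b) * (\<integral>\<^sup>+z. ennreal (indicator S z * (iterpd [True] \<phi> z)\<^sup>2) \<partial>lborel)"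
    using nn_integral_strip_le[OF a b Y cont[unfolded S_def] deriv[unfolded S_def]]
    unfolding S_def Q_def .
  also have "(\<integral>\<^sup>+z. ennreal (indicator S z * (\<phi> z)\<^sup>2) \<partial>lborel)
      = (\<integral>\<^sup>+z. ennreal (indicator S z * (\<phi> z)\<^sup>2) \<partial>lebesgue)"
    using meas by (simp add: nn_integral_completion)
  also have "(\<integral>\<^sup>+z. ennreal (indicator S z * (iterpd [True] \<phi> z)\<^sup>2) \<partial>lborel)
      = (\<integral>\<^sup>+z. ennreal (indicator S z * (iterpd [True] \<phi> z)\<^sup>2) \<partial>lebesgue)"
    using meas by (simp add: nn_integral_completion)
  also have "\<dots> \<le> (\<integral>\<^sup>+z. ennreal (indicator S z * (norm (grad \<phi> z))\<^sup>2) \<partial>lebesgue)"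
    by (intro nn_integral_mono ennreal_leI mult_left_mono) (auto simp: grad_def norm_Pair)
  finally show ?thesis
    by (simp add: mult_left_mono)
qed

lemma strip_estimate_approximant:
  fixes \<Omega> U :: "(real \<times> real) set" and u \<phi> :: "real \<times> real \<Rightarrow> real"
    and G :: "real \<times> real \<Rightarrow> real \<times> real" and a b :: real and Y :: "real set"
  defines "S \<equiv> {-a..a} \<times> Y" and "Q \<equiv> {-b..b} \<times> Y"
  defines "A \<equiv> LINT x:\<Omega>|lebesgue. (u x)\<^sup>2" and "\<Gamma> \<equiv> LINT x:\<Omega>|lebesgue. (norm (G x))\<^sup>2"
    and "\<delta> \<equiv> LINT x:\<Omega>|lebesgue. (\<phi> x - u x)\<^sup>2"
    and "\<gamma> \<equiv> LINT x:\<Omega>|lebesgue. (norm (grad \<phi> x - G x))\<^sup>2"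
  assumes a: "a > 0" and b: "0 \<le> b" "b \<le> a" and Y: "Y \<in> sets borel"
    and U: "open U" "S \<subseteq> U" "U \<subseteq> \<Omega>"
    and diff: "\<phi> differentiable_on U" "iterpd [True] \<phi> differentiable_on U"
    and int: "set_integrable lebesgue \<Omega> (\<lambda>x. (u x)\<^sup>2)"
      "set_integrable lebesgue \<Omega> (\<lambda>x. (norm (G x))\<^sup>2)"
      "set_integrable lebesgue \<Omega> (\<lambda>x. (\<phi> x - u x)\<^sup>2)"
      "set_integrable lebesgue \<Omega> (\<lambda>x. (norm (grad \<phi> x - G x))\<^sup>2)"
  shows "(\<integral>\<^sup>+z. ennreal (indicator Q z * (u z)\<^sup>2) \<partial>lebesgue)
     \<le> ennreal (2 * (3 * b / a * (2 * A + 2 * \<delta>) + 2 * a * b * (2 * \<Gamma> + 2 * \<gamma>)) + 2 * \<delta>)"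
proof -
  have SQ: "Q \<subseteq> S" "S \<subseteq> \<Omega>" "Q \<in> sets borel"
    using b U Y unfolding S_def Q_def by (auto intro: sets_borel_Times_interval)
  define k where "k = 3 * b / a"
  define k' where "k' = 2 * a * b"
  define X where "X = 2 * A + 2 * \<delta>"
  define X' where "X' = 2 * \<Gamma> + 2 * \<gamma>"
  have nonneg: "0 \<le> k" "0 \<le> k'" "0 \<le> X" "0 \<le> X'" "0 \<le> \<delta>"
    using a b unfolding k_def k'_def X_def X'_def A_def \<Gamma>_def \<delta>_def \<gamma>_def
    by (auto intro!: set_integral_nonneg add_nonneg_nonneg)
  have "continuous_on Q \<phi>"
    using SQ U by (blast intro: continuous_on_subset differentiable_imp_continuous_on diff(1))
  then have meas: "(\<lambda>z. indicator Q z * (\<phi> z)\<^sup>2) \<in> borel_measurable lebesgue"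
    using SQ by (auto intro!: measurable_completion borel_measurable_indicator_mult_continuous continuous_intros)
  have "(\<integral>\<^sup>+z. ennreal (indicator Q z * (u z)\<^sup>2) \<partial>lebesgue)
      \<le> 2 * (\<integral>\<^sup>+z. ennreal (indicator Q z * (\<phi> z)\<^sup>2) \<partial>lebesgue) + 2 * ennreal \<delta>"
    unfolding \<delta>_def using meas int(3) SQ by (intro nn_integral_indicator_sq_le_approx) auto
  also have "\<dots> \<le> 2 * (ennreal k * ennreal X + ennreal k' * ennreal X') + 2 * ennreal \<delta>"
  proof -
    have "(\<integral>\<^sup>+z. ennreal (indicator S z * (\<phi> z)\<^sup>2) \<partial>lebesgue) \<le> ennreal X"
      using nn_integral_indicator_norm_sq_le[of lebesgue \<Omega> u \<phi> S] int(1,3) SQ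
      by (simp add: X_def A_def \<delta>_def)
    moreover have "(\<integral>\<^sup>+z. ennreal (indicator S z * (norm (grad \<phi> z))\<^sup>2) \<partial>lebesgue) \<le> ennreal X'"
      using nn_integral_indicator_norm_sq_le[of lebesgue \<Omega> G "grad \<phi>" S] int(2,4) SQ
      by (simp add: X'_def \<Gamma>_def \<gamma>_def)
    ultimately have "(\<integral>\<^sup>+z. ennreal (indicator Q z * (\<phi> z)\<^sup>2) \<partial>lebesgue)
        \<le> ennreal k * ennreal X + ennreal k' * ennreal X'"
      using strip_estimate_smooth[OF a b Y U(1) U(2)[unfolded S_def] diff] unfolding S_def Q_def k_def k'_def
      by (meson add_mono mult_left_mono order_trans zero_le)
    then show ?thesis
      by (intro add_right_mono mult_left_mono) auto
  qed
  also have "\<dots> = ennreal (2 * (k * X + k' * X') + 2 * \<delta>)"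
    using nonneg by (simp add: ennreal_plus ennreal_mult)
  finally show ?thesis
    unfolding k_def k'_def X_def X'_def .
qed

lemma strip_estimate_H1D:
  fixes \<Omega> :: "(real \<times> real) set" and u :: "real \<times> real \<Rightarrow> real"
    and G :: "real \<times> real \<Rightarrow> real \<times> real" and a b :: real and Y :: "real set"
  defines "S \<equiv> {-a..a} \<times> Y" and "Q \<equiv> {-b..b} \<times> Y"
  assumes H: "(u, G) \<in> H1D \<Omega> t D"
    and a: "a > 0" and b: "0 \<le> b" "b \<le> a" and Y: "Y \<in> sets borel"
    and S: "S \<subseteq> interior \<Omega> - slit t"
  shows "(\<integral>\<^sup>+z. ennreal (indicator Q z * (u z)\<^sup>2) \<partial>lebesgue)
     \<le> ennreal (12 * b / a * (LINT x:\<Omega>|lebesgue. (u x)\<^sup>2) + 8 * a * b * (LINT x:\<Omega>|lebesgue. (norm (G x))\<^sup>2))"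
proof -
  define A where "A = (LINT x:\<Omega>|lebesgue. (u x)\<^sup>2)"
  define \<Gamma> where "\<Gamma> = (LINT x:\<Omega>|lebesgue. (norm (G x))\<^sup>2)"
  from H have int: "set_integrable lebesgue \<Omega> (\<lambda>x. (u x)\<^sup>2)"
    "set_integrable lebesgue \<Omega> (\<lambda>x. (norm (G x))\<^sup>2)"
    by (auto simp: H1D_def)
  from H obtain \<phi> where test: "\<And>n. slit_test \<Omega> t D (\<phi> n)"
    and int_approx: "\<And>n. set_integrable lebesgue \<Omega> (\<lambda>x. (\<phi> n x - u x)\<^sup>2)"
      "\<And>n. set_integrable lebesgue \<Omega> (\<lambda>x. (norm (grad (\<phi> n) x - G x))\<^sup>2)"
    and lim: "(\<lambda>n. LINT x:\<Omega>|lebesgue. (\<phi> n x - u x)\<^sup>2) \<longlonglongrightarrow> 0"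
      "(\<lambda>n. LINT x:\<Omega>|lebesgue. (norm (grad (\<phi> n) x - G x))\<^sup>2) \<longlonglongrightarrow> 0"
    unfolding H1D_def by blast
  define F where "F n = 2 * (3 * b / a * (2 * A + 2 * (LINT x:\<Omega>|lebesgue. (\<phi> n x - u x)\<^sup>2))
      + 2 * a * b * (2 * \<Gamma> + 2 * (LINT x:\<Omega>|lebesgue. (norm (grad (\<phi> n) x - G x))\<^sup>2)))
      + 2 * (LINT x:\<Omega>|lebesgue. (\<phi> n x - u x)\<^sup>2)" for n
  have U: "open (interior \<Omega> - slit t)" "interior \<Omega> - slit t \<subseteq> \<Omega>"
    by (auto simp: slit_def intro!: open_Diff closed_Times dest: interior_subset[THEN subsetD])
  have diff: "iterpd ds (\<phi> n) differentiable_on (interior \<Omega> - slit t)" for ds n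
    using test[of n] unfolding slit_test_def by blast
  have bound: "(\<integral>\<^sup>+z. ennreal (indicator Q z * (u z)\<^sup>2) \<partial>lebesgue) \<le> ennreal (F n)" for n
    unfolding Q_def F_def A_def \<Gamma>_def
    by (rule strip_estimate_approximant[OF a b Y U(1) S[unfolded S_def] U(2)
          diff[of "[]", simplified] diff int int_approx])
  have "F \<longlonglongrightarrow> 2 * (3 * b / a * (2 * A + 2 * 0) + 2 * a * b * (2 * \<Gamma> + 2 * 0)) + 2 * 0"
    unfolding F_def by (intro tendsto_intros lim)
  also have "2 * (3 * b / a * (2 * A + 2 * 0) + 2 * a * b * (2 * \<Gamma> + 2 * 0)) + 2 * 0
      = 12 * b / a * A + 8 * a * b * \<Gamma>"
    by simp
  finally have "(\<lambda>n. ennreal (F n)) \<longlonglongrightarrow> ennreal (12 * b / a * A + 8 * a * b * \<Gamma>)"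
    by (rule tendsto_ennrealI)
  then show ?thesis
    unfolding A_def \<Gamma>_def by (rule LIMSEQ_le_const) (use bound in auto)
qed

lemma eigenfunction_energy:
  assumes "is_eigenfunction \<Omega> t D u G E"
  shows "(LINT x:\<Omega>|lebesgue. (norm (G x))\<^sup>2) = E * (LINT x:\<Omega>|lebesgue. (u x)\<^sup>2)"
proof -
  have "(u, G) \<in> H1D \<Omega> t D"
    using assms by (simp add: is_eigenfunction_def)
  then have "(LINT x:\<Omega>|lebesgue. G x \<bullet> G x) = E * (LINT x:\<Omega>|lebesgue. u x * u x)"
    using assms by (simp add: is_eigenfunction_def)
  then show ?thesis
    unfolding power2_norm_eq_inner by (simp only: power2_eq_square)
qed

lemma ell_nbhd_subset_box:
  assumes "0 \<le> t" "t \<le> r"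
  shows "ell_nbhd t r \<subseteq> {-2 * r..2 * r} \<times> {-r..r}"
proof
  fix z assume "z \<in> ell_nbhd t r"
  then obtain \<rho> \<theta> where z: "z = ell_coord t \<rho> \<theta>" and \<rho>: "0 \<le> \<rho>" "\<rho> \<le> r"
    by (auto simp: ell_nbhd_def)
  have "sqrt (\<rho>\<^sup>2 + t\<^sup>2) \<le> sqrt (\<rho>\<^sup>2) + sqrt (t\<^sup>2)"
    by (rule sqrt_add_le_add_sqrt) auto
  then have "sqrt (\<rho>\<^sup>2 + t\<^sup>2) \<le> 2 * r"
    using assms \<rho> by simp
  moreover have "\<bar>sqrt (\<rho>\<^sup>2 + t\<^sup>2) * cos \<theta>\<bar> \<le> sqrt (\<rho>\<^sup>2 + t\<^sup>2)"
    using abs_cos_le_one[of \<theta>] by (simp add: abs_mult mult_left_le)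
  moreover have "\<bar>\<rho> * sin \<theta>\<bar> \<le> \<rho>"
    using abs_sin_le_one[of \<theta>] \<rho> by (simp add: abs_mult mult_left_le)
  ultimately show "z \<in> {-2 * r..2 * r} \<times> {-r..r}"
    using \<rho> by (auto simp: z ell_coord_def abs_le_iff)
qed

lemma eigenfunction_mass_near_slit:
  fixes \<Omega> :: "(real \<times> real) set" and u :: "real \<times> real \<Rightarrow> real"
  assumes \<Omega>: "ball 0 (2 * a) \<subseteq> \<Omega>" and t: "0 < t" "t \<le> r" and r: "2 * r \<le> a"
    and eig: "is_eigenfunction \<Omega> t D u G E" and E: "E \<le> E0"
  shows "(LINT x:(ell_nbhd t r \<inter> \<Omega>)|lebesgue. (u x)\<^sup>2)
    \<le> r * (24 / a + 16 * a * E0) * (LINT x:\<Omega>|lebesgue. (u x)\<^sup>2)"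
proof -
  define A where "A = (LINT x:\<Omega>|lebesgue. (u x)\<^sup>2)"
  define \<Gamma> where "\<Gamma> = (LINT x:\<Omega>|lebesgue. (norm (G x))\<^sup>2)"
  define Y where "Y = {-r..r} - {0::real}"
  have a: "a > 0" using t r by simp
  have A: "0 \<le> A" unfolding A_def by (auto intro: set_integral_nonneg)
  have \<Gamma>: "0 \<le> \<Gamma>"
    unfolding \<Gamma>_def by (rule set_integral_nonneg) simp
  have "\<Gamma> \<le> E0 * A"
    using eigenfunction_energy[OF eig] E A by (simp add: A_def \<Gamma>_def mult_right_mono)
  have "{-a..a} \<times> Y \<subseteq> ball 0 (2 * a) - UNIV \<times> {0}"
  proof clarify
    fix x y assume "x \<in> {-a..a}" "y \<in> Y"
    then have "norm (x, y) < 2 * a"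
      using norm_Pair_le[of x y] t r by (auto simp: Y_def)
    then show "(x, y) \<in> ball 0 (2 * a) - UNIV \<times> {0}"
      using \<open>y \<in> Y\<close> by (simp add: Y_def)
  qed
  moreover have "ball 0 (2 * a) \<subseteq> interior \<Omega>"
    using \<Omega> by (intro interior_maximal) auto
  ultimately have S: "{-a..a} \<times> Y \<subseteq> interior \<Omega> - slit t"
    by (auto simp: slit_def)
  have cover: "z \<in> {-2 * r..2 * r} \<times> Y" if "z \<in> ell_nbhd t r" "z \<notin> UNIV \<times> {0}" for z
    using ell_nbhd_subset_box[of t r] t that by (auto simp: Y_def)
  have "(\<integral>\<^sup>+z. ennreal (indicator (ell_nbhd t r \<inter> \<Omega>) z * (u z)\<^sup>2) \<partial>lebesgue)
      \<le> (\<integral>\<^sup>+z. ennreal (indicator ({-2 * r..2 * r} \<times> Y) z * (u z)\<^sup>2) \<partial>lebesgue)"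
    using AE_not_in[OF null_sets_horizontal_axis]
    by (intro nn_integral_mono_AE) (auto elim!: eventually_mono dest: cover simp: indicator_def)
  also have "\<dots> \<le> ennreal (12 * (2 * r) / a * A + 8 * a * (2 * r) * \<Gamma>)"
    using strip_estimate_H1D[of u G \<Omega> t D a "2 * r" Y] eig S t r
    by (simp add: is_eigenfunction_def A_def \<Gamma>_def Y_def)
  finally have "(\<integral>\<^sup>+z. ennreal (indicator (ell_nbhd t r \<inter> \<Omega>) z * (u z)\<^sup>2) \<partial>lebesgue)
      \<le> ennreal (24 * r / a * A + 16 * a * r * \<Gamma>)"
    by (simp add: algebra_simps)
  moreover have "0 \<le> 24 * r / a * A + 16 * a * r * \<Gamma>"
    using a t A \<Gamma> by simp
  moreover have "24 * r / a * A + 16 * a * r * \<Gamma> \<le> r * (24 / a + 16 * a * E0) * A"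
    using a t \<open>\<Gamma> \<le> E0 * A\<close> by (simp add: algebra_simps)
  ultimately show ?thesis
    unfolding A_def
    by (intro set_integral_le_of_nn_integral_le) (auto intro: order_trans ennreal_leI)
qed

theorem lemma3p2:
  fixes \<Omega> :: "(real \<times> real) set"
    and D :: "real \<Rightarrow> (nat \<Rightarrow> real \<times> real) set set"
    and \<epsilon> E0 :: real
  assumes "compact_domain \<Omega>" and "lipschitz_boundary \<Omega>"
    and "\<exists>e>0. ball 0 e \<subseteq> \<Omega>"
    and "\<forall>t>0. D t \<subseteq> slit_boundary \<Omega> t \<and> boundary_measurable \<Omega> t (D t)"
    and "\<epsilon> > 0" and "E0 > 0"
  shows "\<exists>r>0. \<forall>t. 0 < t \<and> t < r \<longrightarrow>
           (\<forall>u G E. is_eigenfunction \<Omega> t (D t) u G E \<and> E \<le> E0 \<longrightarrow>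
              (LINT x:(ell_nbhd t r \<inter> \<Omega>)|lebesgue. (u x)\<^sup>2)
                \<le> \<epsilon> * (LINT x:\<Omega>|lebesgue. (u x)\<^sup>2))"
proof -
  obtain a where a: "a > 0" "ball 0 (2 * a) \<subseteq> \<Omega>"
    using assms(3) by (metis field_sum_of_halves half_gt_zero mult_2)
  define K where "K = 24 / a + 16 * a * E0"
  define r where "r = min (a / 2) (\<epsilon> / K)"
  have K: "K > 0" using a assms(6) by (simp add: K_def add_pos_pos)
  have r: "r > 0" "2 * r \<le> a" "r * K \<le> \<epsilon>"
    using a K assms(5) by (auto simp: r_def min_def field_simps)
  show ?thesis
  proof (intro exI[of _ r] conjI allI impI)
    fix t u G E
    assume t: "0 < t \<and> t < r" and eig: "is_eigenfunction \<Omega> t (D t) u G E \<and> E \<le> E0"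
    have "(LINT x:(ell_nbhd t r \<inter> \<Omega>)|lebesgue. (u x)\<^sup>2) \<le> r * K * (LINT x:\<Omega>|lebesgue. (u x)\<^sup>2)"
      unfolding K_def using t eig by (intro eigenfunction_mass_near_slit[OF a(2) _ _ r(2)]) auto
    also have "\<dots> \<le> \<epsilon> * (LINT x:\<Omega>|lebesgue. (u x)\<^sup>2)"
      using r(3) by (intro mult_right_mono set_integral_nonneg) auto
    finally show "(LINT x:(ell_nbhd t r \<inter> \<Omega>)|lebesgue. (u x)\<^sup>2) \<le> \<epsilon> * (LINT x:\<Omega>|lebesgue. (u x)\<^sup>2)" .
  qed (rule r(1))
qed

end
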